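(* Let $\succeq$ be a preference order on $\mathcal L^\infty(\Omega,\mathcal F)$ satisfying (SM) and (PC). Then for all $f,g\in\mathcal L^\infty(\Omega,\mathcal F)$ with $f(\omega)\ge g(\omega)$ for all $\omega\in\Omega$ we have $f\succeq g$.
   Context: $\mathcal L^\infty(\Omega,\mathcal F)$: bounded $\mathcal F$-measurable real functions. Preference order: complete transitive relation; $\succ,\sim$ as usual. Null events $\mathcal N_\succeq=\{A\in\mathcal F: f1_A+g1_{A^c}\sim g\ \forall f,g\}$. (SM): for $A\notin\mathcal N_\succeq$, every $f$ and constants $x>y$: $x1_A+f1_{A^c}\succ y1_A+f1_{A^c}$. (PC): for uniformly bounded $f_n\to f$ pointwise and $g\succ f$ (resp. $f\succ g$) there is $N$ with $g\succ f_n$ (resp. $f_n\succ g$) for $n>N$. *)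

theory Defs
  imports "HOL-Analysis.Analysis"
begin

text \<open>The sample space Omega is the universe of the type 'a; F is a sigma-algebra on it.\<close>

definition Linf :: "'a set set \<Rightarrow> ('a \<Rightarrow> real) set" where
  "Linf F = {f. f \<in> borel_measurable (sigma UNIV F) \<and> bounded (range f)}"

definition pref_order :: "'a set set \<Rightarrow> (('a \<Rightarrow> real) \<Rightarrow> ('a \<Rightarrow> real) \<Rightarrow> bool) \<Rightarrow> bool" where
  "pref_order F P \<longleftrightarrow>
     (\<forall>f\<in>Linf F. \<forall>g\<in>Linf F. P f g \<or> P g f) \<and>
     (\<forall>f\<in>Linf F. \<forall>g\<in>Linf F. \<forall>h\<in>Linf F. P f g \<longrightarrow> P g h \<longrightarrow> P f h)"

definition strict_pref :: "(('a \<Rightarrow> real) \<Rightarrow> ('a \<Rightarrow> real) \<Rightarrow> bool) \<Rightarrow> ('a \<Rightarrow> real) \<Rightarrow> ('a \<Rightarrow> real) \<Rightarrow> bool" where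
  "strict_pref P f g \<longleftrightarrow> P f g \<and> \<not> P g f"

definition indiff :: "(('a \<Rightarrow> real) \<Rightarrow> ('a \<Rightarrow> real) \<Rightarrow> bool) \<Rightarrow> ('a \<Rightarrow> real) \<Rightarrow> ('a \<Rightarrow> real) \<Rightarrow> bool" where
  "indiff P f g \<longleftrightarrow> P f g \<and> P g f"

definition splice :: "'a set \<Rightarrow> ('a \<Rightarrow> real) \<Rightarrow> ('a \<Rightarrow> real) \<Rightarrow> 'a \<Rightarrow> real" where
  "splice A f g = (\<lambda>\<omega>. if \<omega> \<in> A then f \<omega> else g \<omega>)"

definition null_events :: "'a set set \<Rightarrow> (('a \<Rightarrow> real) \<Rightarrow> ('a \<Rightarrow> real) \<Rightarrow> bool) \<Rightarrow> 'a set set" where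
  "null_events F P = {A \<in> F. \<forall>f\<in>Linf F. \<forall>g\<in>Linf F. indiff P (splice A f g) g}"

definition SM :: "'a set set \<Rightarrow> (('a \<Rightarrow> real) \<Rightarrow> ('a \<Rightarrow> real) \<Rightarrow> bool) \<Rightarrow> bool" where
  "SM F P \<longleftrightarrow> (\<forall>A\<in>F. A \<notin> null_events F P \<longrightarrow>
     (\<forall>f\<in>Linf F. \<forall>x y::real. x > y \<longrightarrow>
        strict_pref P (splice A (\<lambda>_. x) f) (splice A (\<lambda>_. y) f)))"

definition PC :: "'a set set \<Rightarrow> (('a \<Rightarrow> real) \<Rightarrow> ('a \<Rightarrow> real) \<Rightarrow> bool) \<Rightarrow> bool" where
  "PC F P \<longleftrightarrow> (\<forall>fs f g. (\<forall>n. fs n \<in> Linf F) \<and> f \<in> Linf F \<and> g \<in> Linf F \<and>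
      (\<exists>B. \<forall>n \<omega>. \<bar>fs n \<omega>\<bar> \<le> B) \<and> (\<forall>\<omega>. (\<lambda>n. fs n \<omega>) \<longlonglongrightarrow> f \<omega>) \<longrightarrow>
      (strict_pref P g f \<longrightarrow> (\<exists>N. \<forall>n>N. strict_pref P g (fs n))) \<and>
      (strict_pref P f g \<longrightarrow> (\<exists>N. \<forall>n>N. strict_pref P (fs n) g)))"

end

theory Submission
  imports Defs
begin

text \<open>
  For functions with finitely many values, \<open>f \<ge> g\<close> implies \<open>f \<succeq> g\<close>: lower \<open>f\<close> to \<open>g\<close> one
  level set \<open>{f = a, g = b}\<close> at a time; each step is a weak improvement, by (SM) if the level
  set is non-null and by nullness otherwise. In general, if \<open>g \<succ> f\<close> then by (PC) also
  \<open>g \<succ> h\<close> for a finite-valued \<open>h \<ge> f\<close> close to \<open>f\<close>, and again by (PC) \<open>k \<succ> h\<close> for a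
  finite-valued \<open>k \<le> g\<close> close to \<open>g\<close>; but \<open>k \<le> h\<close>, contradicting the finite-valued case.
\<close>

lemma sets_sigma_UNIV: "sigma_algebra UNIV F \<Longrightarrow> sets (sigma UNIV F) = F"
  by (simp add: sets_measure_of sigma_algebra.sigma_sets_eq sigma_algebra_iff2)

lemma Linf_bounded:
  assumes "f \<in> Linf F"
  obtains B where "\<And>\<omega>. \<bar>f \<omega>\<bar> \<le> B"
  using assms unfolding Linf_def bounded_iff by (auto simp: real_norm_def)

lemma Linf_iff_bounded:
  "f \<in> Linf F \<longleftrightarrow> f \<in> borel_measurable (sigma UNIV F) \<and> (\<exists>B. \<forall>\<omega>. \<bar>f \<omega>\<bar> \<le> B)"
  unfolding Linf_def bounded_iff by (auto simp: real_norm_def)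

lemma Linf_const: "(\<lambda>_. c) \<in> Linf F"
  unfolding Linf_def by auto

lemma Linf_uminus: "f \<in> Linf F \<Longrightarrow> (\<lambda>\<omega>. - f \<omega>) \<in> Linf F"
  unfolding Linf_iff_bounded by auto

lemma Linf_splice:
  assumes "sigma_algebra UNIV F" "A \<in> F" "u \<in> Linf F" "w \<in> Linf F"
  shows "splice A u w \<in> Linf F"
proof -
  obtain B C where "\<And>\<omega>. \<bar>u \<omega>\<bar> \<le> B" "\<And>\<omega>. \<bar>w \<omega>\<bar> \<le> C"
    using assms(3,4) Linf_bounded by metis
  then have "\<bar>splice A u w \<omega>\<bar> \<le> max B C" for \<omega>
    by (auto simp: splice_def intro: max.coboundedI1 max.coboundedI2)
  moreover have "splice A u w \<in> borel_measurable (sigma UNIV F)"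
    unfolding splice_def using assms sets_sigma_UNIV[OF assms(1)]
    by (intro measurable_If_set) (auto simp: Linf_def)
  ultimately show ?thesis
    unfolding Linf_iff_bounded by blast
qed

lemma level_set_in_events:
  assumes "sigma_algebra UNIV F" "u \<in> Linf F" "v \<in> Linf F"
  shows "{\<omega>. u \<omega> = a \<and> v \<omega> = b} \<in> F"
proof -
  have "u \<in> borel_measurable (sigma UNIV F)" "v \<in> borel_measurable (sigma UNIV F)"
    using assms by (auto simp: Linf_def)
  then have "{\<omega> \<in> space (sigma UNIV F). u \<omega> = a \<and> v \<omega> = b} \<in> sets (sigma UNIV F)"
    by measurable
  then show ?thesis
    using sets_sigma_UNIV[OF assms(1)] by simp
qed

lemma pref_order_refl: "pref_order F P \<Longrightarrow> u \<in> Linf F \<Longrightarrow> P u u"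
  unfolding pref_order_def by blast

lemma pref_order_trans:
  "pref_order F P \<Longrightarrow> P u v \<Longrightarrow> P v w \<Longrightarrow> u \<in> Linf F \<Longrightarrow> v \<in> Linf F \<Longrightarrow> w \<in> Linf F \<Longrightarrow> P u w"
  unfolding pref_order_def by blast

lemma pref_order_strict_if_not:
  "pref_order F P \<Longrightarrow> \<not> P u v \<Longrightarrow> u \<in> Linf F \<Longrightarrow> v \<in> Linf F \<Longrightarrow> strict_pref P v u"
  unfolding pref_order_def strict_pref_def by blast

lemma pref_lower_const_on_event:
  assumes sa: "sigma_algebra UNIV F" and SM: "SM F P"
    and u: "u \<in> Linf F" and A: "A \<in> F" and "b < a" and u_A: "\<And>\<omega>. \<omega> \<in> A \<Longrightarrow> u \<omega> = a"
  shows "P u (splice A (\<lambda>_. b) u)"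
proof (cases "A \<in> null_events F P")
  case False
  have "splice A (\<lambda>_. a) u = u"
    using u_A by (auto simp: splice_def)
  moreover have "strict_pref P (splice A (\<lambda>_. a) u) (splice A (\<lambda>_. b) u)"
    using SM False A u \<open>b < a\<close> unfolding SM_def by blast
  ultimately show ?thesis
    by (simp add: strict_pref_def)
next
  case True
  then have "indiff P (splice A (\<lambda>_. b) u) u"
    unfolding null_events_def using Linf_const u by blast
  then show ?thesis
    by (simp add: indiff_def)
qed

lemma pref_mono_finite_difference:
  assumes sa: "sigma_algebra UNIV F" and po: "pref_order F P" and SM: "SM F P"
    and "finite R"
  shows "u \<in> Linf F \<Longrightarrow> v \<in> Linf F \<Longrightarrow> (\<And>\<omega>. v \<omega> \<le> u \<omega>) \<Longrightarrow>
    {(u \<omega>, v \<omega>) |\<omega>. u \<omega> \<noteq> v \<omega>} \<subseteq> R \<Longrightarrow> P u v"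
  using \<open>finite R\<close>
proof (induction R arbitrary: u rule: finite_induct)
  case empty
  then have "u = v"
    by blast
  then show ?case
    using pref_order_refl[OF po empty.prems(1)] by simp
next
  case (insert p R)
  obtain a b where p: "p = (a, b)"
    by fastforce
  define A where "A = {\<omega>. u \<omega> = a \<and> v \<omega> = b}"
  show ?case
  proof (cases "A = {} \<or> a = b")
    case True
    then have "{(u \<omega>, v \<omega>) |\<omega>. u \<omega> \<noteq> v \<omega>} \<subseteq> R"
      using insert.prems(4) p unfolding A_def by auto
    then show ?thesis
      using insert.IH insert.prems by blast
  next
    case False
    then obtain \<omega>\<^sub>0 where "u \<omega>\<^sub>0 = a" "v \<omega>\<^sub>0 = b" "a \<noteq> b"
      unfolding A_def by blast
    then have "b < a"
      using insert.prems(3)[of \<omega>\<^sub>0] by auto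
    have A: "A \<in> F"
      unfolding A_def using sa insert.prems(1,2) by (rule level_set_in_events)
    define w where "w = splice A (\<lambda>_. b) u"
    have w: "w \<in> Linf F"
      unfolding w_def using sa A Linf_const insert.prems(1) by (rule Linf_splice)
    have "P u w"
      unfolding w_def using sa SM insert.prems(1) A \<open>b < a\<close> by (rule pref_lower_const_on_event) (simp add: A_def)
    moreover have "P w v"
    proof (rule insert.IH[OF w insert.prems(2)])
      show "v \<omega> \<le> w \<omega>" for \<omega>
        using insert.prems(3)[of \<omega>] by (auto simp: w_def splice_def A_def)
      show "{(w \<omega>, v \<omega>) |\<omega>. w \<omega> \<noteq> v \<omega>} \<subseteq> R"
        using insert.prems(4) p by (auto simp: w_def splice_def A_def)
    qed
    ultimately show ?thesis
      using pref_order_trans[OF po] insert.prems(1,2) w by blast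
  qed
qed

lemma pref_mono_finite_range:
  assumes "sigma_algebra UNIV F" "pref_order F P" "SM F P"
    and "u \<in> Linf F" "v \<in> Linf F" "finite (range u)" "finite (range v)" "\<And>\<omega>. v \<omega> \<le> u \<omega>"
  shows "P u v"
proof (rule pref_mono_finite_difference[OF assms(1-3) _ assms(4,5,8)])
  show "finite (range u \<times> range v)"
    using assms(6,7) by blast
qed auto

lemma PC_strict_pref_approx:
  assumes PC: "PC F P" and fs: "\<And>n. fs n \<in> Linf F" and "f \<in> Linf F" "g \<in> Linf F"
    and bounded: "\<And>n \<omega>. \<bar>fs n \<omega>\<bar> \<le> B" and lim: "\<And>\<omega>. (\<lambda>n. fs n \<omega>) \<longlonglongrightarrow> f \<omega>"
  shows "strict_pref P g f \<Longrightarrow> \<exists>n. strict_pref P g (fs n)"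
    and "strict_pref P f g \<Longrightarrow> \<exists>n. strict_pref P (fs n) g"
proof -
  have "(strict_pref P g f \<longrightarrow> (\<exists>N. \<forall>n>N. strict_pref P g (fs n))) \<and>
      (strict_pref P f g \<longrightarrow> (\<exists>N. \<forall>n>N. strict_pref P (fs n) g))"
    using PC fs assms(3,4) bounded lim unfolding PC_def by blast
  then show "strict_pref P g f \<Longrightarrow> \<exists>n. strict_pref P g (fs n)"
    and "strict_pref P f g \<Longrightarrow> \<exists>n. strict_pref P (fs n) g"
    by (meson lessI)+
qed

definition round_up :: "nat \<Rightarrow> ('a \<Rightarrow> real) \<Rightarrow> 'a \<Rightarrow> real" where
  "round_up n f = (\<lambda>\<omega>. of_int \<lceil>real (Suc n) * f \<omega>\<rceil> / real (Suc n))"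

lemma round_up_ge: "f \<omega> \<le> round_up n f \<omega>"
  using le_of_int_ceiling[of "real (Suc n) * f \<omega>"]
  unfolding round_up_def by (simp add: field_simps del: of_nat_Suc)

lemma round_up_le: "round_up n f \<omega> \<le> f \<omega> + 1 / real (Suc n)"
  using of_int_ceiling_le_add_one[of "real (Suc n) * f \<omega>"]
  unfolding round_up_def by (simp add: field_simps del: of_nat_Suc)

lemma round_up_tendsto: "(\<lambda>n. round_up n f \<omega>) \<longlonglongrightarrow> f \<omega>"
proof (rule real_tendsto_sandwich[of "\<lambda>_. f \<omega>" _ _ "\<lambda>n. f \<omega> + 1 / real (Suc n)"])
  have "(\<lambda>n. 1 / real (Suc n)) \<longlonglongrightarrow> 0"
    using LIMSEQ_inverse_real_of_nat by (simp add: inverse_eq_divide)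
  then show "(\<lambda>n. f \<omega> + 1 / real (Suc n)) \<longlonglongrightarrow> f \<omega>"
    using tendsto_add[OF tendsto_const, of _ 0] by fastforce
  show "\<forall>\<^sub>F n in sequentially. f \<omega> \<le> round_up n f \<omega>"
    "\<forall>\<^sub>F n in sequentially. round_up n f \<omega> \<le> f \<omega> + 1 / real (Suc n)"
    by (simp_all only: round_up_ge round_up_le eventually_True)
qed simp

lemma round_up_finite_range:
  assumes "\<And>\<omega>. \<bar>f \<omega>\<bar> \<le> B"
  shows "finite (range (round_up n f))"
proof -
  let ?c = "real (Suc n)"
  have "\<lceil>?c * f \<omega>\<rceil> \<in> {\<lceil>- (?c * B)\<rceil>..\<lceil>?c * B\<rceil>}" for \<omega>
  proof -
    have "- B \<le> f \<omega>" "f \<omega> \<le> B"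
      using assms[of \<omega>] by auto
    then have "- (?c * B) \<le> ?c * f \<omega>" "?c * f \<omega> \<le> ?c * B"
      using mult_left_mono[of "- B" "f \<omega>" ?c] mult_left_mono[of "f \<omega>" B ?c] by auto
    then show ?thesis
      by (auto intro: ceiling_mono)
  qed
  then have "range (round_up n f) \<subseteq> (\<lambda>k. of_int k / ?c) ` {\<lceil>- (?c * B)\<rceil>..\<lceil>?c * B\<rceil>}"
    unfolding round_up_def by blast
  then show ?thesis
    by (rule finite_subset) simp
qed

lemma simple_approx_from_above:
  assumes "f \<in> Linf F"
  obtains fs B where "\<And>n. fs n \<in> Linf F" "\<And>n. finite (range (fs n))" "\<And>n \<omega>. f \<omega> \<le> fs n \<omega>"
    "\<And>n \<omega>. \<bar>fs n \<omega>\<bar> \<le> B" "\<And>\<omega>. (\<lambda>n. fs n \<omega>) \<longlonglongrightarrow> f \<omega>"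
proof -
  obtain C where C: "\<And>\<omega>. \<bar>f \<omega>\<bar> \<le> C"
    using assms Linf_bounded by blast
  have bound: "\<bar>round_up n f \<omega>\<bar> \<le> \<bar>C\<bar> + 1" for n \<omega>
  proof -
    have "1 / real (Suc n) \<le> 1"
      by simp
    then show ?thesis
      using round_up_ge[of f \<omega> n] round_up_le[of n f \<omega>] C[of \<omega>] by linarith
  qed
  have "f \<in> borel_measurable (sigma UNIV F)"
    using assms by (simp add: Linf_def)
  then have "round_up n f \<in> borel_measurable (sigma UNIV F)" for n
    unfolding round_up_def by measurable
  then have "round_up n f \<in> Linf F" for n
    using bound unfolding Linf_iff_bounded by blast
  then show ?thesis
    using bound round_up_finite_range[of f C] C round_up_ge round_up_tendsto
    by (intro that[of "\<lambda>n. round_up n f" "\<bar>C\<bar> + 1"]) auto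
qed

lemma simple_approx_from_below:
  assumes "g \<in> Linf F"
  obtains gs B where "\<And>n. gs n \<in> Linf F" "\<And>n. finite (range (gs n))" "\<And>n \<omega>. gs n \<omega> \<le> g \<omega>"
    "\<And>n \<omega>. \<bar>gs n \<omega>\<bar> \<le> B" "\<And>\<omega>. (\<lambda>n. gs n \<omega>) \<longlonglongrightarrow> g \<omega>"
proof -
  obtain fs B where fs: "\<And>n. fs n \<in> Linf F" "\<And>n. finite (range (fs n))"
    "\<And>n \<omega>. - g \<omega> \<le> fs n \<omega>" "\<And>n \<omega>. \<bar>fs n \<omega>\<bar> \<le> B" "\<And>\<omega>. (\<lambda>n. fs n \<omega>) \<longlonglongrightarrow> - g \<omega>"
    using simple_approx_from_above[OF Linf_uminus[OF assms]] by blast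
  have "range (\<lambda>\<omega>. - fs n \<omega>) = uminus ` range (fs n)" for n
    by auto
  then show ?thesis
    using fs tendsto_minus[OF fs(5)] Linf_uminus[OF fs(1)]
    by (intro that[of "\<lambda>n \<omega>. - fs n \<omega>" B]) (auto simp: minus_le_iff)
qed

theorem mainTheorem12:
  fixes F :: "'a set set"
    and P :: "('a \<Rightarrow> real) \<Rightarrow> ('a \<Rightarrow> real) \<Rightarrow> bool"
  assumes "sigma_algebra UNIV F"
    and "pref_order F P"
    and "SM F P"
    and "PC F P"
  shows "\<forall>f\<in>Linf F. \<forall>g\<in>Linf F. (\<forall>\<omega>. f \<omega> \<ge> g \<omega>) \<longrightarrow> P f g"
proof (intro ballI impI)
  fix f g
  assume f: "f \<in> Linf F" and g: "g \<in> Linf F" and g_le_f: "\<forall>\<omega>. f \<omega> \<ge> g \<omega>"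
  obtain fs B where fs: "\<And>n. fs n \<in> Linf F" "\<And>n. finite (range (fs n))" "\<And>n \<omega>. f \<omega> \<le> fs n \<omega>"
    "\<And>n \<omega>. \<bar>fs n \<omega>\<bar> \<le> B" "\<And>\<omega>. (\<lambda>n. fs n \<omega>) \<longlonglongrightarrow> f \<omega>"
    using simple_approx_from_above[OF f] by blast
  obtain gs C where gs: "\<And>n. gs n \<in> Linf F" "\<And>n. finite (range (gs n))" "\<And>n \<omega>. gs n \<omega> \<le> g \<omega>"
    "\<And>n \<omega>. \<bar>gs n \<omega>\<bar> \<le> C" "\<And>\<omega>. (\<lambda>n. gs n \<omega>) \<longlonglongrightarrow> g \<omega>"
    using simple_approx_from_below[OF g] by blast
  show "P f g"
  proof (rule ccontr)
    assume "\<not> P f g"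
    then have "strict_pref P g f"
      using pref_order_strict_if_not[OF assms(2) _ f g] by blast
    then obtain n where "strict_pref P g (fs n)"
      using PC_strict_pref_approx(1)[OF assms(4) fs(1) f g fs(4,5)] by blast
    then obtain m where "strict_pref P (gs m) (fs n)"
      using PC_strict_pref_approx(2)[OF assms(4) gs(1) g fs(1) gs(4,5)] by blast
    moreover have "gs m \<omega> \<le> fs n \<omega>" for \<omega>
      using gs(3) g_le_f fs(3) by (meson order_trans)
    then have "P (fs n) (gs m)"
      using fs gs by (intro pref_mono_finite_range[OF assms(1-3)])
    ultimately show False
      by (simp add: strict_pref_def)
  qed
qed

end
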